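(* Let $(G,c)$ be a connected locally finite network in which every edge has conductance $1$ (i.e. $c_{xy}\in\{0,1\}$ for all $x,y$), with fixed vertex $o$. If $\Delta_c$ is bounded on $\mathcal H_{\mathcal E_c}$, then for any bounded conductance function $b$ on $G$ with $b_{xy}=0$ whenever $c_{xy}=0$ and with $(G,b)$ connected, $\Delta_b$ is bounded on $\mathcal H_{\mathcal E_b}$.
   Context: A conductance function on a countable set $G$ is a symmetric map $c:G\times G\to[0,\infty)$ with $c_{xx}=0$; $x\sim y$ iff $c_{xy}>0$; locally finite and connected. $\mathcal E_c(u,v)=\frac12\sum_{x,y}c_{xy}\overline{(u(x)-u(y))}(v(x)-v(y))$; $\mathcal H_{\mathcal E_c}$ is the Hilbert space of finite-energy functions modulo constants with inner product $\mathcal E_c$. $v_x^{(c)}$ is the unique element of $\mathcal H_{\mathcal E_c}$ with $\langle v_x^{(c)},u\rangle_{\mathcal E_c}=u(x)-u(o)$ for all $u$. The Laplacian $(\Delta_c v)(x)=\sum_{y\sim x}c_{xy}(v(x)-v(y))$ is an operator on $\mathcal H_{\mathcal E_c}$ with domain $\mathrm{span}\{v_x^{(c)}\}_{x\in G}$. Same for $b$. A conductance function $b$ is bounded if $\sup_{x,y}b_{xy}<\infty$. *)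

theory Defs
  imports "HOL-Analysis.Analysis"
begin

text \<open>Networks on a countable vertex type 'a. Functions on vertices are complex valued;
  elements of the energy space H_E are represented by functions (modulo constants).\<close>

definition conductance :: "('a \<Rightarrow> 'a \<Rightarrow> real) \<Rightarrow> bool" where
  "conductance c \<longleftrightarrow> (\<forall>x y. c x y = c y x) \<and> (\<forall>x y. 0 \<le> c x y) \<and> (\<forall>x. c x x = 0)"

definition locally_finite_net :: "('a \<Rightarrow> 'a \<Rightarrow> real) \<Rightarrow> bool" where
  "locally_finite_net c \<longleftrightarrow> (\<forall>x. finite {y. 0 < c x y})"

definition connected_net :: "('a \<Rightarrow> 'a \<Rightarrow> real) \<Rightarrow> bool" where
  "connected_net c \<longleftrightarrow> (\<forall>x y. (x, y) \<in> {(u, v). 0 < c u v}\<^sup>*)"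

definition bounded_conductance :: "('a \<Rightarrow> 'a \<Rightarrow> real) \<Rightarrow> bool" where
  "bounded_conductance b \<longleftrightarrow> (\<exists>M. \<forall>x y. b x y \<le> M)"

definition finite_energy :: "('a \<Rightarrow> 'a \<Rightarrow> real) \<Rightarrow> ('a \<Rightarrow> complex) \<Rightarrow> bool" where
  "finite_energy c u \<longleftrightarrow> (\<lambda>(x, y). c x y * (cmod (u x - u y))\<^sup>2) summable_on UNIV"

definition energy :: "('a \<Rightarrow> 'a \<Rightarrow> real) \<Rightarrow> ('a \<Rightarrow> complex) \<Rightarrow> ('a \<Rightarrow> complex) \<Rightarrow> complex" where
  "energy c u v = (1/2) * (\<Sum>\<^sub>\<infinity>(x, y)\<in>UNIV. complex_of_real (c x y) * cnj (u x - u y) * (v x - v y))"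

text \<open>v is a representative of the dipole v_x (relative to o).\<close>
definition is_dipole :: "('a \<Rightarrow> 'a \<Rightarrow> real) \<Rightarrow> 'a \<Rightarrow> 'a \<Rightarrow> ('a \<Rightarrow> complex) \<Rightarrow> bool" where
  "is_dipole c r x v \<longleftrightarrow> finite_energy c v \<and>
     (\<forall>u. finite_energy c u \<longrightarrow> energy c v u = u x - u r)"

text \<open>Domain of the Laplacian: span{v_x} (complex linear span of dipole representatives;
  this contains the constants, so it is exactly the set of representatives of span{v_x}).\<close>
definition laplacian_domain :: "('a \<Rightarrow> 'a \<Rightarrow> real) \<Rightarrow> 'a \<Rightarrow> ('a \<Rightarrow> complex) set" where
  "laplacian_domain c r = {u. \<exists>F a w. finite F \<and> (\<forall>x\<in>F. is_dipole c r x (w x)) \<and>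
      u = (\<lambda>z. \<Sum>x\<in>F. a x * w x z)}"

definition laplacian :: "('a \<Rightarrow> 'a \<Rightarrow> real) \<Rightarrow> ('a \<Rightarrow> complex) \<Rightarrow> ('a \<Rightarrow> complex)" where
  "laplacian c v = (\<lambda>x. \<Sum>y\<in>{y. 0 < c x y}. complex_of_real (c x y) * (v x - v y))"

definition laplacian_bounded :: "('a \<Rightarrow> 'a \<Rightarrow> real) \<Rightarrow> 'a \<Rightarrow> bool" where
  "laplacian_bounded c r \<longleftrightarrow> (\<exists>C. \<forall>u\<in>laplacian_domain c r.
      finite_energy c (laplacian c u) \<and>
      sqrt (Re (energy c (laplacian c u) (laplacian c u))) \<le> C * sqrt (Re (energy c u u)))"

end

theory Submission
  imports Defs
begin

text \<open>For an edge \<open>x y\<close> of \<open>c\<close>, the Laplacian of the difference of the dipoles at \<open>x\<close>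
  and \<open>y\<close> is \<open>\<delta>\<^sub>x - \<delta>\<^sub>y\<close>. With unit conductances the energy of \<open>\<delta>\<^sub>x - \<delta>\<^sub>y\<close> is at
  least the degree of \<open>x\<close>, while the difference of the dipoles has energy at most 1; so
  boundedness of \<open>\<Delta>\<^sub>c\<close> bounds the degrees of \<open>c\<close>. The degrees of \<open>b\<close> are then bounded as well,
  and a Laplacian with bounded conductances and bounded degrees is bounded by Cauchy-Schwarz.\<close>

lemma summable_on_norm_le:
  fixes f :: "'b \<Rightarrow> 'c::banach"
  assumes "g summable_on A" and "\<And>x. x \<in> A \<Longrightarrow> norm (f x) \<le> g x"
  shows "f summable_on A"
  by (rule abs_summable_summable, rule summable_on_comparison_test[OF assms(1)]) (use assms(2) in auto)

lemma nonneg_summable_infsum_le: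
  fixes f :: "'b \<Rightarrow> real"
  assumes "\<And>x. 0 \<le> f x" and "\<And>F. finite F \<Longrightarrow> sum f F \<le> B"
  shows "f summable_on UNIV" and "infsum f UNIV \<le> B"
proof -
  show *: "f summable_on UNIV"
    by (rule nonneg_bdd_above_summable_on) (use assms in \<open>auto simp: bdd_above_def\<close>)
  show "infsum f UNIV \<le> B"
    by (rule infsum_le_finite_sums[OF *]) (use assms in auto)
qed

lemma Cauchy_if_dist_le_null:
  fixes X :: "nat \<Rightarrow> real"
  assumes d: "d \<longlonglongrightarrow> 0" and le: "\<And>m n. \<bar>X m - X n\<bar> \<le> d m + d n"
  shows "Cauchy X"
proof (rule CauchyI)
  fix e :: real assume "0 < e"
  then obtain N where N: "\<And>n. N \<le> n \<Longrightarrow> d n < e / 2"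
    using order_tendstoD(2)[OF d, of "e / 2"] by (auto simp: eventually_sequentially)
  show "\<exists>M. \<forall>m\<ge>M. \<forall>n\<ge>M. norm (X m - X n) < e"
  proof (intro exI allI impI)
    fix m n assume "N \<le> m" "N \<le> n"
    thus "norm (X m - X n) < e" using le[of m n] N[of m] N[of n] by simp
  qed
qed

lemma linear_coeff_eq_0_if_quadratic_nonneg:
  fixes B H :: real
  assumes q: "\<And>t. 0 \<le> 2 * t * B + t\<^sup>2 * H"
  shows "B = 0"
proof (rule ccontr)
  assume B: "B \<noteq> 0"
  define s where "s = 1 / (\<bar>H\<bar> + 1)"
  have s: "0 < s" by (simp add: s_def add_pos_nonneg)
  have "s * H \<le> s * \<bar>H\<bar>" using s by (simp add: mult_left_mono)
  also have "\<dots> < 1" by (simp add: s_def)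
  finally have sH: "s * H < 1" .
  have "0 \<le> 2 * (- B * s) * B + (- B * s)\<^sup>2 * H" by (rule q)
  also have "\<dots> = (s * B\<^sup>2) * (s * H - 2)" by (simp add: power2_eq_square algebra_simps)
  also have "\<dots> < 0" using s sH B by (intro mult_pos_neg) auto
  finally show False by simp
qed

definition renergy_density :: "('a \<Rightarrow> 'a \<Rightarrow> real) \<Rightarrow> ('a \<Rightarrow> real) \<Rightarrow> 'a \<times> 'a \<Rightarrow> real" where
  "renergy_density c f = (\<lambda>p. c (fst p) (snd p) * (f (fst p) - f (snd p))\<^sup>2)"

definition rform_density ::
    "('a \<Rightarrow> 'a \<Rightarrow> real) \<Rightarrow> ('a \<Rightarrow> real) \<Rightarrow> ('a \<Rightarrow> real) \<Rightarrow> 'a \<times> 'a \<Rightarrow> real" where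
  "rform_density c f g = (\<lambda>p. c (fst p) (snd p) * (f (fst p) - f (snd p)) * (g (fst p) - g (snd p)))"

definition finite_renergy :: "('a \<Rightarrow> 'a \<Rightarrow> real) \<Rightarrow> ('a \<Rightarrow> real) \<Rightarrow> bool" where
  "finite_renergy c f \<longleftrightarrow> renergy_density c f summable_on UNIV"

text \<open>The real energy and form are summed over ordered pairs without the factor 1/2,
  so \<open>renergy c f\<close> is twice the energy of \<open>f\<close>.\<close>

definition renergy :: "('a \<Rightarrow> 'a \<Rightarrow> real) \<Rightarrow> ('a \<Rightarrow> real) \<Rightarrow> real" where
  "renergy c f = infsum (renergy_density c f) UNIV"

definition rform :: "('a \<Rightarrow> 'a \<Rightarrow> real) \<Rightarrow> ('a \<Rightarrow> real) \<Rightarrow> ('a \<Rightarrow> real) \<Rightarrow> real" where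
  "rform c f g = infsum (rform_density c f g) UNIV"

context
  fixes c :: "'a \<Rightarrow> 'a \<Rightarrow> real"
  assumes nonneg: "\<And>x y. 0 \<le> c x y"
begin

lemma renergy_density_nonneg: "0 \<le> renergy_density c f p"
  by (simp add: renergy_density_def nonneg)

lemma abs_rform_density_le: "\<bar>rform_density c f g p\<bar> \<le> renergy_density c f p + renergy_density c g p"
proof -
  define k where "k = c (fst p) (snd p)"
  define s where "s = f (fst p) - f (snd p)"
  define t where "t = g (fst p) - g (snd p)"
  have "2 * \<bar>s\<bar> * \<bar>t\<bar> \<le> s\<^sup>2 + t\<^sup>2" using sum_squares_bound[of "\<bar>s\<bar>" "\<bar>t\<bar>"] by simp
  moreover have "0 \<le> \<bar>s\<bar> * \<bar>t\<bar>" by simp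
  ultimately have st: "\<bar>s * t\<bar> \<le> s\<^sup>2 + t\<^sup>2" using abs_mult[of s t] by linarith
  have "\<bar>rform_density c f g p\<bar> = k * \<bar>s * t\<bar>"
    by (simp add: rform_density_def k_def s_def t_def abs_mult nonneg)
  also have "\<dots> \<le> k * (s\<^sup>2 + t\<^sup>2)" by (rule mult_left_mono[OF st]) (simp add: k_def nonneg)
  also have "\<dots> = renergy_density c f p + renergy_density c g p"
    by (simp add: renergy_density_def k_def s_def t_def algebra_simps)
  finally show ?thesis .
qed

lemma rform_density_summable:
  "finite_renergy c f \<Longrightarrow> finite_renergy c g \<Longrightarrow> rform_density c f g summable_on UNIV"
  unfolding finite_renergy_def
  by (rule summable_on_norm_le[of "\<lambda>p. renergy_density c f p + renergy_density c g p"])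
    (auto intro: summable_on_add abs_rform_density_le)

lemma renergy_density_add_scaled:
  "renergy_density c (\<lambda>z. f z + t * g z) p =
     renergy_density c f p + 2 * t * rform_density c f g p + t\<^sup>2 * renergy_density c g p"
  by (simp add: renergy_density_def rform_density_def power2_eq_square algebra_simps)

lemma finite_renergy_add_scaled:
  assumes "finite_renergy c f" "finite_renergy c g"
  shows "finite_renergy c (\<lambda>z. f z + t * g z)"
proof -
  have "(\<lambda>p. renergy_density c f p + 2 * t * rform_density c f g p + t\<^sup>2 * renergy_density c g p)
      summable_on UNIV"
    using assms rform_density_summable[OF assms] unfolding finite_renergy_def
    by (intro summable_on_add summable_on_cmult_right) auto
  thus ?thesis unfolding finite_renergy_def renergy_density_add_scaled .
qed

lemma renergy_add_scaled:
  assumes f: "finite_renergy c f" and g: "finite_renergy c g"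
  shows "renergy c (\<lambda>z. f z + t * g z) = renergy c f + 2 * t * rform c f g + t\<^sup>2 * renergy c g"
proof -
  note s = f[unfolded finite_renergy_def] g[unfolded finite_renergy_def] rform_density_summable[OF f g]
  have "renergy c (\<lambda>z. f z + t * g z) = infsum (\<lambda>p. renergy_density c f p
      + 2 * t * rform_density c f g p + t\<^sup>2 * renergy_density c g p) UNIV"
    unfolding renergy_def renergy_density_add_scaled ..
  also have "\<dots> = renergy c f + 2 * t * rform c f g + t\<^sup>2 * renergy c g"
    using s by (simp add: infsum_add summable_on_add summable_on_cmult_right infsum_cmult_right
        renergy_def rform_def)
  finally show ?thesis .
qed

lemma rform_add_scaled:
  assumes "finite_renergy c f" "finite_renergy c g" "finite_renergy c h"
  shows "rform c f (\<lambda>z. g z + t * h z) = rform c f g + t * rform c f h"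
proof -
  have s: "rform_density c f g summable_on UNIV" "rform_density c f h summable_on UNIV"
    using rform_density_summable assms by auto
  have "rform_density c f (\<lambda>z. g z + t * h z) = (\<lambda>p. rform_density c f g p + t * rform_density c f h p)"
    by (auto simp: rform_density_def algebra_simps)
  thus ?thesis
    using s by (simp add: rform_def infsum_add summable_on_cmult_right infsum_cmult_right)
qed

lemma renergy_nonneg: "0 \<le> renergy c f"
  unfolding renergy_def by (rule infsum_nonneg) (rule renergy_density_nonneg)

lemma sum_renergy_density_le_renergy:
  "finite_renergy c f \<Longrightarrow> finite P \<Longrightarrow> sum (renergy_density c f) P \<le> renergy c f"
  unfolding renergy_def finite_renergy_def
  by (rule finite_sum_le_infsum) (auto intro: renergy_density_nonneg)

end

lemma rform_add_const: "rform c f (\<lambda>z. g z + k) = rform c f g"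
  unfolding rform_def rform_density_def by simp

lemma finite_renergy_add_const: "finite_renergy c f \<Longrightarrow> finite_renergy c (\<lambda>z. f z + k)"
  unfolding finite_renergy_def renergy_density_def by simp

lemma finite_renergy_scaled: "finite_renergy c f \<Longrightarrow> finite_renergy c (\<lambda>z. t * f z)"
proof -
  assume "finite_renergy c f"
  hence "(\<lambda>p. t\<^sup>2 * renergy_density c f p) summable_on UNIV"
    unfolding finite_renergy_def by (rule summable_on_cmult_right)
  moreover have "(\<lambda>p. t\<^sup>2 * renergy_density c f p) = renergy_density c (\<lambda>z. t * f z)"
    by (auto simp: renergy_density_def power2_eq_square algebra_simps)
  ultimately show ?thesis unfolding finite_renergy_def by simp
qed

lemma rform_scaled_left: "rform c (\<lambda>z. t * f z) g = t * rform c f g"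
proof -
  have "rform_density c (\<lambda>z. t * f z) g = (\<lambda>p. t * rform_density c f g p)"
    by (auto simp: rform_density_def algebra_simps)
  thus ?thesis unfolding rform_def by (cases "t = 0") (auto simp: infsum_cmult_right')
qed

lemma rform_self: "rform c f f = renergy c f"
  unfolding rform_def renergy_def rform_density_def renergy_density_def
  by (simp add: power2_eq_square mult.assoc)

lemma rform_commute: "rform c f g = rform c g f"
  unfolding rform_def rform_density_def by (simp add: algebra_simps)

lemma renergy_scaled:
  "finite_renergy c f \<Longrightarrow> renergy c (\<lambda>z. t * f z) = t\<^sup>2 * renergy c f"
proof -
  assume "finite_renergy c f"
  have "renergy_density c (\<lambda>z. t * f z) = (\<lambda>p. t\<^sup>2 * renergy_density c f p)"
    by (auto simp: renergy_density_def power2_eq_square algebra_simps)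
  thus ?thesis using \<open>finite_renergy c f\<close>
    by (simp add: renergy_def infsum_cmult_right finite_renergy_def)
qed

lemma renergy_parallelogram:
  assumes nonneg: "\<And>x y. 0 \<le> c x y" and f: "finite_renergy c f" and g: "finite_renergy c g"
  shows "renergy c (\<lambda>z. f z - g z) + 4 * renergy c (\<lambda>z. (f z + g z) / 2)
    = 2 * renergy c f + 2 * renergy c g"
proof -
  have half: "(\<lambda>z. (f z + g z) / 2) = (\<lambda>z. 1 / 2 * (f z + 1 * g z))" by auto
  have "renergy c (\<lambda>z. (f z + g z) / 2) = (1 / 2)\<^sup>2 * renergy c (\<lambda>z. f z + 1 * g z)"
    unfolding half by (rule renergy_scaled[OF finite_renergy_add_scaled[OF nonneg f g]])
  moreover have "(\<lambda>z. f z - g z) = (\<lambda>z. f z + (- 1) * g z)" by auto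
  ultimately show ?thesis using renergy_add_scaled[OF nonneg f g, of 1] renergy_add_scaled[OF nonneg f g, of "- 1"]
    by (simp add: power2_eq_square algebra_simps)
qed

lemma abs_diff_le_renergy:
  assumes nonneg: "\<And>x y. 0 \<le> c x y" and ab: "0 < c a b" and f: "finite_renergy c f"
  shows "\<bar>f a - f b\<bar> \<le> sqrt (renergy c f) / sqrt (c a b)"
proof -
  have "sum (renergy_density c f) {(a, b)} \<le> renergy c f"
    by (rule sum_renergy_density_le_renergy[OF nonneg f]) simp
  hence "(f a - f b)\<^sup>2 \<le> renergy c f / c a b"
    using ab by (simp add: renergy_density_def pos_le_divide_eq mult.commute)
  hence "sqrt ((f a - f b)\<^sup>2) \<le> sqrt (renergy c f / c a b)" by (rule real_sqrt_le_mono)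
  thus ?thesis by (simp add: real_sqrt_divide)
qed

lemma renergy_bounds_point_diff:
  assumes nonneg: "\<And>x y. 0 \<le> c x y" and path: "(z, r) \<in> {(u, v). 0 < c u v}\<^sup>*"
  shows "\<exists>k\<ge>0. \<forall>f. finite_renergy c f \<longrightarrow> \<bar>f z - f r\<bar> \<le> k * sqrt (renergy c f)"
  using path
proof (induction rule: rtrancl_induct)
  case base
  show ?case by (rule exI[of _ 0]) simp
next
  case (step a b)
  then obtain k where k: "k \<ge> 0" "\<forall>f. finite_renergy c f \<longrightarrow> \<bar>f z - f a\<bar> \<le> k * sqrt (renergy c f)"
    by blast
  have ab: "0 < c a b" using step by simp
  show ?case
  proof (rule exI[of _ "k + 1 / sqrt (c a b)"], intro conjI allI impI)
    show "0 \<le> k + 1 / sqrt (c a b)" using k ab by simp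
    fix f assume f: "finite_renergy c f"
    have "\<bar>f z - f b\<bar> \<le> \<bar>f z - f a\<bar> + \<bar>f a - f b\<bar>" by simp
    also have "\<dots> \<le> k * sqrt (renergy c f) + sqrt (renergy c f) / sqrt (c a b)"
      using k(2) f abs_diff_le_renergy[OF nonneg ab f] by (meson add_mono)
    finally show "\<bar>f z - f b\<bar> \<le> (k + 1 / sqrt (c a b)) * sqrt (renergy c f)"
      by (simp add: algebra_simps)
  qed
qed

lemma finite_renergy_if_finite_support:
  assumes c: "conductance c" and lf: "locally_finite_net c"
    and S: "finite S" and f: "\<And>z. z \<notin> S \<Longrightarrow> f z = 0"
  shows "finite_renergy c f"
proof -
  define E where "E = Sigma S (\<lambda>a. {b. 0 < c a b})"
  have "finite E"
    using S lf unfolding locally_finite_net_def E_def by (intro finite_SigmaI) auto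
  hence T: "finite (E \<union> prod.swap ` E)" by blast
  have "renergy_density c f p = 0" if "p \<notin> E \<union> prod.swap ` E" for p
  proof (rule ccontr)
    assume ne: "renergy_density c f p \<noteq> 0"
    obtain a b where p: "p = (a, b)" by fastforce
    have "c a b \<noteq> 0" "f a \<noteq> f b" using ne p by (auto simp: renergy_density_def)
    hence "0 < c a b" "0 < c b a" "a \<in> S \<or> b \<in> S"
      using c f unfolding conductance_def by (metis order_le_less)+
    hence "(a, b) \<in> E \<or> (b, a) \<in> E" unfolding E_def by blast
    thus False using that p by (auto simp: image_iff)
  qed
  hence "renergy_density c f summable_on UNIV \<longleftrightarrow> renergy_density c f summable_on (E \<union> prod.swap ` E)"
    by (intro summable_on_cong_neutral) auto
  thus ?thesis unfolding finite_renergy_def using T by simp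
qed

lemma rform_indicator:
  assumes c: "conductance c" and lf: "locally_finite_net c"
  shows "rform c f (indicator {z}) = 2 * (\<Sum>b\<in>{b. 0 < c z b}. c z b * (f z - f b))"
proof -
  define N where "N = {b. 0 < c z b}"
  have N: "finite N" using lf unfolding N_def locally_finite_net_def by auto
  have sym: "\<And>a b. c a b = c b a" and nonneg: "\<And>a b. 0 \<le> c a b" and zN: "z \<notin> N"
    using c unfolding conductance_def N_def by auto
  define S1 where "S1 = (\<lambda>b. (z, b)) ` N"
  define S2 where "S2 = (\<lambda>b. (b, z)) ` N"
  have fin: "finite S1" "finite S2" using N S1_def S2_def by simp_all
  have disj: "S1 \<inter> S2 = {}" using zN unfolding S1_def S2_def by blast
  have outside: "rform_density c f (indicator {z}) p = 0" if "p \<notin> S1 \<union> S2" for p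
  proof (rule ccontr)
    assume ne: "rform_density c f (indicator {z}) p \<noteq> 0"
    obtain a b where p: "p = (a, b)" by fastforce
    have "c a b \<noteq> 0" "indicator {z} a \<noteq> (indicator {z} b :: real)"
      using ne p by (auto simp: rform_density_def)
    hence "0 < c a b" "a = z \<or> b = z" using nonneg[of a b] by (auto simp: indicator_def)
    hence "p \<in> S1 \<union> S2" using p sym unfolding S1_def S2_def N_def by auto
    thus False using that by simp
  qed
  have "rform c f (indicator {z}) = infsum (rform_density c f (indicator {z})) (S1 \<union> S2)"
    unfolding rform_def by (rule infsum_cong_neutral) (use outside in auto)
  also have "\<dots> = sum (rform_density c f (indicator {z})) (S1 \<union> S2)" using fin by simp
  also have "\<dots> = sum (rform_density c f (indicator {z})) S1 + sum (rform_density c f (indicator {z})) S2"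
    by (rule sum.union_disjoint[OF fin disj])
  also have "sum (rform_density c f (indicator {z})) S1 = (\<Sum>b\<in>N. c z b * (f z - f b))"
    unfolding S1_def using zN
    by (subst sum.reindex) (auto simp: inj_on_def rform_density_def indicator_def intro!: sum.cong)
  also have "sum (rform_density c f (indicator {z})) S2 = (\<Sum>b\<in>N. c z b * (f z - f b))"
    unfolding S2_def using zN
    by (subst sum.reindex) (auto simp: inj_on_def rform_density_def indicator_def sym[of _ z] algebra_simps intro!: sum.cong)
  finally show ?thesis unfolding N_def by simp
qed

lemma renergy_pointwise_limit:
  assumes nonneg: "\<And>x y. 0 \<le> c x y" and lim: "\<And>z. (\<lambda>n. F n z) \<longlonglongrightarrow> v z"
    and F: "\<And>n. finite_renergy c (F n)" and le: "\<And>n. renergy c (F n) \<le> B n" and B: "B \<longlonglongrightarrow> m"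
  shows "finite_renergy c v" and "renergy c v \<le> m"
proof -
  have "sum (renergy_density c v) P \<le> m" if P: "finite P" for P
  proof (rule LIMSEQ_le)
    show "(\<lambda>n. sum (renergy_density c (F n)) P) \<longlonglongrightarrow> sum (renergy_density c v) P"
      unfolding renergy_density_def by (intro tendsto_intros lim)
    show "\<exists>N. \<forall>n\<ge>N. sum (renergy_density c (F n)) P \<le> B n"
      using sum_renergy_density_le_renergy[OF nonneg F P] le order_trans by blast
  qed (rule B)
  thus "finite_renergy c v" "renergy c v \<le> m"
    using nonneg_summable_infsum_le[of "renergy_density c v" m] renergy_density_nonneg[of c, OF nonneg]
    unfolding finite_renergy_def renergy_def by auto
qed

lemma Cauchy_if_renergy_Cauchy:
  assumes nonneg: "\<And>x y. 0 \<le> c x y" and path: "(z, r) \<in> {(u, v). 0 < c u v}\<^sup>*"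
    and F: "\<And>n. finite_renergy c (F n)" and Fr: "\<And>n. F n r = 0"
    and diff: "\<And>m n. renergy c (\<lambda>w. F m w - F n w) \<le> e m + e n"
    and e: "e \<longlonglongrightarrow> 0" and e_nonneg: "\<And>n. 0 \<le> e n"
  shows "Cauchy (\<lambda>n. F n z)"
proof -
  obtain k where k: "k \<ge> 0" "\<And>f. finite_renergy c f \<Longrightarrow> \<bar>f z - f r\<bar> \<le> k * sqrt (renergy c f)"
    using renergy_bounds_point_diff[OF nonneg path] by blast
  show ?thesis
  proof (rule Cauchy_if_dist_le_null)
    show "(\<lambda>n. k * sqrt (e n)) \<longlonglongrightarrow> 0"
      using tendsto_mult_right[OF tendsto_real_sqrt[OF e], of k] by (simp add: mult.commute)
    fix m n
    have "finite_renergy c (\<lambda>w. F m w - F n w)"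
      using finite_renergy_add_scaled[OF nonneg F[of m] F[of n], of "- 1"] by simp
    hence "\<bar>F m z - F n z\<bar> \<le> k * sqrt (renergy c (\<lambda>w. F m w - F n w))"
      using k(2) Fr[of m] Fr[of n] by fastforce
    also have "\<dots> \<le> k * sqrt (e m + e n)"
      using diff k(1) by (intro mult_left_mono real_sqrt_le_mono) auto
    also have "\<dots> \<le> k * sqrt (e m) + k * sqrt (e n)"
      using sqrt_add_le_add_sqrt[OF e_nonneg e_nonneg] k(1)
      by (metis distrib_left mult_left_mono)
    finally show "\<bar>F m z - F n z\<bar> \<le> k * sqrt (e m) + k * sqrt (e n)" .
  qed
qed

text \<open>The dipole at \<open>x\<close> is a multiple of the minimiser of the energy among functions with
  \<open>f r = 0\<close> and \<open>f x = 1\<close>. A minimising sequence is Cauchy in energy by the parallelogram law,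
  hence pointwise Cauchy because point evaluations along paths are controlled by the energy,
  and its pointwise limit is a minimiser by lower semicontinuity. No completion of the energy
  space is needed.\<close>

lemma renergy_minimizer_exists:
  assumes c: "conductance c" and lf: "locally_finite_net c" and conn: "connected_net c"
    and xr: "x \<noteq> r"
  defines "A \<equiv> {f. finite_renergy c f \<and> f r = 0 \<and> f x = 1}"
  shows "\<exists>v\<in>A. \<forall>f\<in>A. renergy c v \<le> renergy c f"
proof -
  have nonneg: "\<And>x y. 0 \<le> c x y" using c unfolding conductance_def by auto
  define m where "m = Inf (renergy c ` A)"
  have "indicator {x} \<in> A"
    using finite_renergy_if_finite_support[OF c lf, of "{x}"] xr by (simp add: A_def)
  hence ne: "renergy c ` A \<noteq> {}" by blast
  have bdd: "bdd_below (renergy c ` A)"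
    unfolding bdd_below_def using renergy_nonneg[of c, OF nonneg] by blast
  have m_le: "m \<le> renergy c f" if "f \<in> A" for f
    unfolding m_def using bdd that by (simp add: cInf_lower)
  define e where "e n = inverse (real (Suc n))" for n
  have "\<exists>f\<in>A. renergy c f < m + e n" for n
    using cInf_lessD[OF ne, of "m + e n"] unfolding m_def e_def by auto
  then obtain F where FA: "\<And>n. F n \<in> A" and FE: "\<And>n. renergy c (F n) < m + e n" by metis
  have F: "\<And>n. finite_renergy c (F n)" and Fr: "\<And>n. F n r = 0" and Fx: "\<And>n. F n x = 1"
    using FA by (auto simp: A_def)
  have e: "(\<lambda>n. 2 * e n) \<longlonglongrightarrow> 0"
    unfolding e_def using tendsto_mult_right_zero[OF LIMSEQ_inverse_real_of_nat] .
  have diff: "renergy c (\<lambda>w. F n w - F n' w) \<le> 2 * e n + 2 * e n'" for n n'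
  proof -
    have "(\<lambda>w. (F n w + F n' w) / 2) \<in> A"
      using finite_renergy_scaled[OF finite_renergy_add_scaled[OF nonneg F[of n] F[of n'], of 1], of "1 / 2"]
        Fr Fx by (simp add: A_def add_divide_distrib)
    hence "m \<le> renergy c (\<lambda>w. (F n w + F n' w) / 2)" by (rule m_le)
    thus ?thesis using renergy_parallelogram[OF nonneg F[of n] F[of n']] FE[of n] FE[of n'] by linarith
  qed
  have "Cauchy (\<lambda>n. F n z)" for z
    using Cauchy_if_renergy_Cauchy[OF nonneg _ F Fr diff e] conn
    unfolding connected_net_def e_def by auto
  then obtain v where lim: "\<And>z. (\<lambda>n. F n z) \<longlonglongrightarrow> v z"
    unfolding Cauchy_convergent_iff convergent_def by metis
  have B: "(\<lambda>n. m + e n) \<longlonglongrightarrow> m" unfolding e_def by (rule LIMSEQ_inverse_real_of_nat_add)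
  note v = renergy_pointwise_limit[OF nonneg lim F less_imp_le[OF FE] B]
  have "v \<in> A"
    using v(1) lim[of r] lim[of x] Fr Fx by (simp add: A_def LIMSEQ_const_iff)
  thus ?thesis using v(2) m_le by (meson order_trans)
qed

lemma rform_eq_0_if_minimizer:
  assumes nonneg: "\<And>x y. 0 \<le> c x y" and v: "finite_renergy c v" and h: "finite_renergy c h"
    and min: "\<And>t. renergy c v \<le> renergy c (\<lambda>z. v z + t * h z)"
  shows "rform c v h = 0"
proof (rule linear_coeff_eq_0_if_quadratic_nonneg)
  fix t
  show "0 \<le> 2 * t * rform c v h + t\<^sup>2 * renergy c h"
    using min[of t] renergy_add_scaled[OF nonneg v h] by simp
qed

lemma real_dipole_exists:
  assumes c: "conductance c" and lf: "locally_finite_net c" and conn: "connected_net c"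
  shows "\<exists>f. finite_renergy c f \<and> (\<forall>g. finite_renergy c g \<longrightarrow> rform c f g = 2 * (g x - g r))"
proof (cases "x = r")
  case True
  show ?thesis
    by (rule exI[of _ "\<lambda>z. 0"]) (simp add: True finite_renergy_def renergy_density_def
        rform_def rform_density_def)
next
  case False
  have nonneg: "\<And>x y. 0 \<le> c x y" using c unfolding conductance_def by auto
  define A where "A = {f. finite_renergy c f \<and> f r = 0 \<and> f x = 1}"
  obtain v where vA: "v \<in> A" and min: "\<And>f. f \<in> A \<Longrightarrow> renergy c v \<le> renergy c f"
    using renergy_minimizer_exists[OF c lf conn False] unfolding A_def by blast
  have v: "finite_renergy c v" "v r = 0" "v x = 1" using vA by (auto simp: A_def)
  obtain k where "k \<ge> 0" "\<And>f. finite_renergy c f \<Longrightarrow> \<bar>f x - f r\<bar> \<le> k * sqrt (renergy c f)"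
    using renergy_bounds_point_diff[of c, OF nonneg] conn unfolding connected_net_def by blast
  hence "1 \<le> k * sqrt (renergy c v)" using v by fastforce
  hence "0 < renergy c v"
    using renergy_nonneg[of c, OF nonneg, of v] by (cases "renergy c v = 0") auto
  have key: "rform c v g = renergy c v * (g x - g r)" if g: "finite_renergy c g" for g
  proof -
    define h where "h z = g z + (- g r) + (- (g x - g r)) * v z" for z
    have h: "finite_renergy c h"
      unfolding h_def by (rule finite_renergy_add_scaled[OF nonneg finite_renergy_add_const[OF g] v(1)])
    have "(\<lambda>z. v z + t * h z) \<in> A" for t
      using finite_renergy_add_scaled[OF nonneg v(1) h] v by (simp add: A_def h_def)
    hence "rform c v h = 0" using rform_eq_0_if_minimizer[OF nonneg v(1) h] min by blast
    moreover have "rform c v h = rform c v (\<lambda>z. g z + (- g r)) + (- (g x - g r)) * rform c v v"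
      unfolding h_def by (rule rform_add_scaled[OF nonneg v(1) finite_renergy_add_const[OF g] v(1)])
    ultimately show ?thesis
      using rform_add_const[of c v g "- g r"] rform_self[of c v] by (simp add: algebra_simps)
  qed
  show ?thesis
  proof (intro exI conjI allI impI)
    show "finite_renergy c (\<lambda>z. 2 / renergy c v * v z)" by (rule finite_renergy_scaled[OF v(1)])
    fix g assume "finite_renergy c g"
    thus "rform c (\<lambda>z. 2 / renergy c v * v z) g = 2 * (g x - g r)"
      using key rform_scaled_left[of c "2 / renergy c v" v g] \<open>0 < renergy c v\<close> by simp
  qed
qed

definition energy_density :: "('a \<Rightarrow> 'a \<Rightarrow> real) \<Rightarrow> ('a \<Rightarrow> complex) \<Rightarrow> 'a \<times> 'a \<Rightarrow> real" where
  "energy_density c u = (\<lambda>p. c (fst p) (snd p) * (cmod (u (fst p) - u (snd p)))\<^sup>2)"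

lemma finite_energy_iff_summable: "finite_energy c u \<longleftrightarrow> energy_density c u summable_on UNIV"
  unfolding finite_energy_def energy_density_def by (simp add: case_prod_unfold)

lemma energy_density_of_real:
  "energy_density c (\<lambda>z. complex_of_real (f z)) = renergy_density c f"
  by (rule ext) (simp add: energy_density_def renergy_density_def flip: of_real_diff)

lemma finite_energy_of_real: "finite_energy c (\<lambda>z. complex_of_real (f z)) \<longleftrightarrow> finite_renergy c f"
  unfolding finite_energy_iff_summable finite_renergy_def energy_density_of_real ..

lemma Re_energy_self:
  assumes nonneg: "\<And>x y. 0 \<le> c x y" and u: "finite_energy c u"
  shows "Re (energy c u u) = infsum (energy_density c u) UNIV / 2"
proof -
  define T where "T = (\<lambda>(x, y). complex_of_real (c x y) * cnj (u x - u y) * (u x - u y))"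
  have T: "T p = complex_of_real (energy_density c u p)" for p
  proof (cases p)
    case (Pair a b)
    have "cnj (u a - u b) * (u a - u b) = complex_of_real ((cmod (u a - u b))\<^sup>2)"
      using complex_norm_square[of "u a - u b"] by (simp add: mult.commute)
    thus ?thesis using Pair by (simp add: T_def energy_density_def mult.assoc)
  qed
  have Ts: "T summable_on UNIV"
  proof (rule summable_on_norm_le)
    show "energy_density c u summable_on UNIV" using u finite_energy_iff_summable by blast
    show "norm (T p) \<le> energy_density c u p" for p
      using nonneg by (simp only: T norm_of_real) (simp add: energy_density_def)
  qed
  have "Re (infsum T UNIV) = infsum (energy_density c u) UNIV"
    using infsum_Re[OF Ts] T by simp
  moreover have "energy c u u = infsum T UNIV / 2" unfolding energy_def T_def by simp
  ultimately show ?thesis by (simp only: Re_divide_numeral)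
qed

lemma Re_energy_of_real:
  assumes "\<And>x y. 0 \<le> c x y" and "finite_renergy c f"
  shows "Re (energy c (\<lambda>z. complex_of_real (f z)) (\<lambda>z. complex_of_real (f z))) = renergy c f / 2"
  using Re_energy_self[of c, OF assms(1)] assms(2)
  by (simp add: finite_energy_of_real energy_density_of_real renergy_def)

lemma finite_renergy_if_increments_le:
  assumes nonneg: "\<And>x y. 0 \<le> c x y" and u: "finite_energy c u"
    and le: "\<And>a b. \<bar>f a - f b\<bar> \<le> cmod (u a - u b)"
  shows "finite_renergy c f"
  unfolding finite_renergy_def
proof (rule summable_on_norm_le[of "energy_density c u"])
  show "energy_density c u summable_on UNIV" using u finite_energy_iff_summable by blast
  fix p
  have "(f (fst p) - f (snd p))\<^sup>2 \<le> (cmod (u (fst p) - u (snd p)))\<^sup>2"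
    using le by (metis abs_ge_zero power2_abs power_mono)
  thus "norm (renergy_density c f p) \<le> energy_density c u p"
    using nonneg by (simp add: renergy_density_def energy_density_def abs_mult mult_left_mono)
qed

lemma finite_renergy_Re_Im:
  assumes nonneg: "\<And>x y. 0 \<le> c x y" and u: "finite_energy c u"
  shows "finite_renergy c (\<lambda>z. Re (u z))" and "finite_renergy c (\<lambda>z. Im (u z))"
proof -
  show "finite_renergy c (\<lambda>z. Re (u z))"
    by (rule finite_renergy_if_increments_le[OF nonneg u]) (metis abs_Re_le_cmod minus_complex.sel(1))
  show "finite_renergy c (\<lambda>z. Im (u z))"
    by (rule finite_renergy_if_increments_le[OF nonneg u]) (metis abs_Im_le_cmod minus_complex.sel(2))
qed

lemma energy_of_real_left:
  assumes nonneg: "\<And>x y. 0 \<le> c x y" and f: "finite_renergy c f" and u: "finite_energy c u"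
  shows "energy c (\<lambda>z. complex_of_real (f z)) u =
     Complex (rform c f (\<lambda>z. Re (u z)) / 2) (rform c f (\<lambda>z. Im (u z)) / 2)"
proof -
  define T where "T = (\<lambda>(x, y). complex_of_real (c x y) *
     cnj (complex_of_real (f x) - complex_of_real (f y)) * (u x - u y))"
  note Re_u = finite_renergy_Re_Im(1)[OF nonneg u] and Im_u = finite_renergy_Re_Im(2)[OF nonneg u]
  have ReT: "Re (T p) = rform_density c f (\<lambda>z. Re (u z)) p" for p
    by (cases p) (simp add: T_def rform_density_def flip: of_real_diff)
  have ImT: "Im (T p) = rform_density c f (\<lambda>z. Im (u z)) p" for p
    by (cases p) (simp add: T_def rform_density_def flip: of_real_diff)
  have "(\<lambda>p. \<bar>Re (T p)\<bar> + \<bar>Im (T p)\<bar>) summable_on UNIV"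
    unfolding ReT ImT using rform_density_summable[OF nonneg f Re_u] rform_density_summable[OF nonneg f Im_u]
    by (intro summable_on_add) (simp_all add: summable_on_iff_abs_summable_on_real[of "rform_density _ _ _"])
  hence T: "T summable_on UNIV" by (rule summable_on_norm_le) (rule cmod_le)
  have "energy c (\<lambda>z. complex_of_real (f z)) u = infsum T UNIV / 2"
    unfolding energy_def T_def by simp
  thus ?thesis
    using infsum_Re[OF T] infsum_Im[OF T] unfolding ReT ImT rform_def by (simp add: complex_eq_iff)
qed

lemma is_dipole_of_real:
  assumes nonneg: "\<And>x y. 0 \<le> c x y" and f: "finite_renergy c f"
    and dipole: "\<And>g. finite_renergy c g \<Longrightarrow> rform c f g = 2 * (g x - g r)"
  shows "is_dipole c r x (\<lambda>z. complex_of_real (f z))"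
  unfolding is_dipole_def
proof (intro conjI allI impI)
  show "finite_energy c (\<lambda>z. complex_of_real (f z))" using f finite_energy_of_real by blast
  fix u assume u: "finite_energy c u"
  from finite_renergy_Re_Im[OF nonneg u]
  show "energy c (\<lambda>z. complex_of_real (f z)) u = u x - u r"
    using energy_of_real_left[OF nonneg f u] dipole by (simp add: complex_eq_iff)
qed

lemma laplacian_of_real:
  "laplacian c (\<lambda>z. complex_of_real (f z)) z =
     complex_of_real (\<Sum>y\<in>{y. 0 < c z y}. c z y * (f z - f y))"
  unfolding laplacian_def by simp

lemma finite_energy_add_scaled:
  assumes nonneg: "\<And>x y. 0 \<le> c x y" and f: "finite_energy c f" and g: "finite_energy c g"
  shows "finite_energy c (\<lambda>z. a * f z + g z)"
  unfolding finite_energy_iff_summable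
proof (rule summable_on_norm_le)
  show "(\<lambda>p. 2 * (cmod a)\<^sup>2 * energy_density c f p + 2 * energy_density c g p) summable_on UNIV"
    using f g unfolding finite_energy_iff_summable by (intro summable_on_add summable_on_cmult_right)
  fix p :: "'a \<times> 'a"
  obtain x y where p: "p = (x, y)" by fastforce
  have diff: "a * f x + g x - (a * f y + g y) = a * (f x - f y) + (g x - g y)"
    by (simp add: algebra_simps)
  have "cmod (a * f x + g x - (a * f y + g y)) \<le> cmod a * cmod (f x - f y) + cmod (g x - g y)"
    unfolding diff using norm_triangle_ineq[of "a * (f x - f y)" "g x - g y"] by (simp only: norm_mult)
  hence "(cmod (a * f x + g x - (a * f y + g y)))\<^sup>2 \<le> (cmod a * cmod (f x - f y) + cmod (g x - g y))\<^sup>2"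
    by (rule power_mono) simp
  also have "\<dots> \<le> 2 * (cmod a)\<^sup>2 * (cmod (f x - f y))\<^sup>2 + 2 * (cmod (g x - g y))\<^sup>2"
    using sum_squares_bound[of "cmod a * cmod (f x - f y)" "cmod (g x - g y)"]
    by (simp add: power2_sum power_mult_distrib)
  finally have "c x y * (cmod (a * f x + g x - (a * f y + g y)))\<^sup>2
      \<le> c x y * (2 * (cmod a)\<^sup>2 * (cmod (f x - f y))\<^sup>2 + 2 * (cmod (g x - g y))\<^sup>2)"
    by (rule mult_left_mono) (rule nonneg)
  moreover have "norm (energy_density c (\<lambda>z. a * f z + g z) p)
      = c x y * (cmod (a * f x + g x - (a * f y + g y)))\<^sup>2"
    using nonneg[of x y] by (simp add: energy_density_def p)
  moreover have "2 * (cmod a)\<^sup>2 * energy_density c f p + 2 * energy_density c g p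
      = c x y * (2 * (cmod a)\<^sup>2 * (cmod (f x - f y))\<^sup>2 + 2 * (cmod (g x - g y))\<^sup>2)"
    by (simp add: energy_density_def p distrib_left)
  ultimately show "norm (energy_density c (\<lambda>z. a * f z + g z) p)
      \<le> 2 * (cmod a)\<^sup>2 * energy_density c f p + 2 * energy_density c g p"
    by simp
qed

lemma laplacian_domain_finite_energy:
  assumes nonneg: "\<And>x y. 0 \<le> c x y" and u: "u \<in> laplacian_domain c r"
  shows "finite_energy c u"
proof -
  obtain F a w where F: "finite F" and w: "\<forall>x\<in>F. is_dipole c r x (w x)"
    and u: "u = (\<lambda>z. \<Sum>x\<in>F. a x * w x z)"
    using u unfolding laplacian_domain_def by blast
  have "finite_energy c (\<lambda>z. \<Sum>x\<in>F. a x * w x z)" using F w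
  proof (induction F rule: finite_induct)
    case empty
    show ?case unfolding finite_energy_iff_summable energy_density_def by simp
  next
    case (insert x F)
    have "finite_energy c (w x)" using insert.prems by (simp add: is_dipole_def)
    moreover have "finite_energy c (\<lambda>z. \<Sum>x\<in>F. a x * w x z)" using insert by simp
    ultimately have "finite_energy c (\<lambda>z. a x * w x z + (\<Sum>x\<in>F. a x * w x z))"
      by (rule finite_energy_add_scaled[of c, OF nonneg])
    thus ?case using insert.hyps by simp
  qed
  thus ?thesis using u by simp
qed

lemma laplacian_real_dipole:
  assumes c: "conductance c" and lf: "locally_finite_net c" and f: "finite_renergy c f"
    and dipole: "\<And>g. finite_renergy c g \<Longrightarrow> rform c f g = 2 * (g x - g r)"
  shows "(\<Sum>y\<in>{y. 0 < c z y}. c z y * (f z - f y)) = indicator {x} z - indicator {r} z"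
proof -
  have "finite_renergy c (indicator {z})"
    by (rule finite_renergy_if_finite_support[OF c lf, of "{z}"]) auto
  thus ?thesis using rform_indicator[OF c lf, of f z] dipole by (auto simp: indicator_def)
qed

lemma renergy_real_dipole_diff_le:
  assumes nonneg: "\<And>x y. 0 \<le> c x y" and xy: "x \<noteq> y" "0 < c x y" "c y x = c x y"
    and fx: "finite_renergy c fx" "\<And>g. finite_renergy c g \<Longrightarrow> rform c fx g = 2 * (g x - g r)"
    and fy: "finite_renergy c fy" "\<And>g. finite_renergy c g \<Longrightarrow> rform c fy g = 2 * (g y - g r)"
  defines "w \<equiv> \<lambda>z. fx z - fy z"
  shows "renergy c w \<le> 2 / c x y"
proof -
  define d where "d = w x - w y"
  have w: "finite_renergy c w"
    using finite_renergy_add_scaled[OF nonneg fx(1) fy(1), of "- 1"] by (simp add: w_def)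
  have "rform c w w = rform c w fx - rform c w fy"
    using rform_add_scaled[OF nonneg w fx(1) fy(1), of "- 1"] by (simp add: w_def)
  hence E: "renergy c w = 2 * d"
    using fx(2)[OF w] fy(2)[OF w] by (simp add: rform_self rform_commute[of c w] d_def)
  have "sum (renergy_density c w) {(x, y), (y, x)} \<le> renergy c w"
    by (rule sum_renergy_density_le_renergy[OF nonneg w]) simp
  moreover have "sum (renergy_density c w) {(x, y), (y, x)} = 2 * c x y * d\<^sup>2"
    using xy by (simp add: renergy_density_def power2_commute d_def)
  ultimately have "c x y * d * d \<le> d" using E by (simp add: power2_eq_square)
  show ?thesis
  proof (cases "d \<le> 0")
    case True
    have "0 \<le> 2 / c x y" using xy(2) by simp
    thus ?thesis using E True by linarith
  next
    case False
    hence "c x y * d \<le> 1" using \<open>c x y * d * d \<le> d\<close> by (simp add: mult_le_cancel_right)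
    thus ?thesis using E xy(2) by (simp add: field_simps)
  qed
qed

lemma card_neighbours_le_renergy:
  assumes nonneg: "\<And>x y. 0 \<le> c x y" and lf: "locally_finite_net c" and loop: "c x x = 0"
    and ge1: "\<And>z. 0 < c x z \<Longrightarrow> 1 \<le> c x z" and xy: "x \<noteq> y"
    and f: "finite_renergy c (\<lambda>z. indicator {x} z - indicator {y} z)"
  shows "real (card {z. 0 < c x z}) \<le> renergy c (\<lambda>z. indicator {x} z - indicator {y} z)"
    (is "_ \<le> renergy c ?g")
proof -
  define N where "N = {z. 0 < c x z}"
  have N: "finite N" using lf unfolding N_def locally_finite_net_def by auto
  have "real (card N) = (\<Sum>z\<in>N. 1)" by simp
  also have "\<dots> \<le> (\<Sum>z\<in>N. renergy_density c ?g (x, z))"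
  proof (rule sum_mono)
    fix z assume "z \<in> N"
    hence "1 \<le> c x z" "z \<noteq> x" using ge1 loop unfolding N_def by auto
    moreover have "1 \<le> (?g x - ?g z)\<^sup>2" using \<open>z \<noteq> x\<close> xy by (auto simp: indicator_def)
    ultimately show "1 \<le> renergy_density c ?g (x, z)"
      unfolding renergy_density_def using mult_mono[of 1 "c x z" 1] by fastforce
  qed
  also have "\<dots> = sum (renergy_density c ?g) (Pair x ` N)"
    by (rule sum.reindex[symmetric, unfolded comp_def]) (simp add: inj_on_def)
  also have "\<dots> \<le> renergy c ?g" by (rule sum_renergy_density_le_renergy[OF nonneg f]) (use N in simp)
  finally show ?thesis unfolding N_def .
qed

lemma laplacian_real_dipole_diff:
  assumes c: "conductance c" and lf: "locally_finite_net c" and f: "\<And>z. finite_renergy c (f z)"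
    and dipole: "\<And>z g. finite_renergy c g \<Longrightarrow> rform c (f z) g = 2 * (g z - g r)"
  shows "laplacian c (\<lambda>z. complex_of_real (f x z - f y z))
    = (\<lambda>z. complex_of_real (indicator {x} z - indicator {y} z))"
proof
  fix z
  have lap: "(\<Sum>q\<in>{q. 0 < c z q}. c z q * (f p z - f p q)) = indicator {p} z - indicator {r} z" for p
    by (rule laplacian_real_dipole[OF c lf f]) (rule dipole)
  have "(\<Sum>q\<in>{q. 0 < c z q}. c z q * ((f x z - f y z) - (f x q - f y q))) =
      (\<Sum>q\<in>{q. 0 < c z q}. c z q * (f x z - f x q)) - (\<Sum>q\<in>{q. 0 < c z q}. c z q * (f y z - f y q))"
    unfolding sum_subtractf[symmetric] by (rule sum.cong) (simp_all add: algebra_simps)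
  also have "\<dots> = indicator {x} z - indicator {y} z" using lap[of x] lap[of y] by simp
  finally show "laplacian c (\<lambda>z. complex_of_real (f x z - f y z)) z
      = complex_of_real (indicator {x} z - indicator {y} z)"
    by (simp only: laplacian_of_real)
qed

lemma real_dipole_diff_in_laplacian_domain:
  assumes nonneg: "\<And>x y. 0 \<le> c x y" and f: "\<And>z. finite_renergy c (f z)"
    and dipole: "\<And>z g. finite_renergy c g \<Longrightarrow> rform c (f z) g = 2 * (g z - g r)"
    and xy: "x \<noteq> y"
  shows "(\<lambda>z. complex_of_real (f x z - f y z)) \<in> laplacian_domain c r"
  unfolding laplacian_domain_def mem_Collect_eq
proof (intro exI conjI)
  show "\<forall>z\<in>{x, y}. is_dipole c r z (\<lambda>q. complex_of_real (f z q))"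
    using is_dipole_of_real[OF nonneg f dipole] by blast
  show "(\<lambda>z. complex_of_real (f x z - f y z))
      = (\<lambda>q. \<Sum>z\<in>{x, y}. (if z = x then 1 else - 1) * complex_of_real (f z q))"
    using xy by auto
qed simp

lemma card_neighbours_le_if_laplacian_le:
  assumes c: "conductance c" and lf: "locally_finite_net c"
    and unit: "\<forall>x y. c x y = 0 \<or> c x y = 1" and xy: "0 < c x y"
    and f: "\<And>z. finite_renergy c (f z)"
    and dipole: "\<And>z g. finite_renergy c g \<Longrightarrow> rform c (f z) g = 2 * (g z - g r)"
    and C: "\<And>u. u \<in> laplacian_domain c r \<Longrightarrow>
      sqrt (Re (energy c (laplacian c u) (laplacian c u))) \<le> C * sqrt (Re (energy c u u))"
  shows "real (card {z. 0 < c x z}) \<le> 2 * C\<^sup>2"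
proof -
  have nonneg: "\<And>x y. 0 \<le> c x y" and sym: "\<And>x y. c x y = c y x" and loop: "\<And>x. c x x = 0"
    using c unfolding conductance_def by auto
  have cxy: "c x y = 1" "x \<noteq> y" using xy unit loop by (metis less_irrefl)+
  define w where "w = (\<lambda>z. f x z - f y z)"
  define g :: "'a \<Rightarrow> real" where "g = (\<lambda>z. indicator {x} z - indicator {y} z)"
  have w: "finite_renergy c w"
    using finite_renergy_add_scaled[OF nonneg f[of x] f[of y], of "- 1"] by (simp add: w_def)
  have g: "finite_renergy c g"
    by (rule finite_renergy_if_finite_support[OF c lf, of "{x, y}"]) (auto simp: g_def)
  have lap: "laplacian c (\<lambda>z. complex_of_real (w z)) = (\<lambda>z. complex_of_real (g z))"
    unfolding w_def g_def by (rule laplacian_real_dipole_diff[OF c lf f dipole])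
  have "(\<lambda>z. complex_of_real (w z)) \<in> laplacian_domain c r"
    unfolding w_def by (rule real_dipole_diff_in_laplacian_domain[OF nonneg f dipole cxy(2)])
  hence "sqrt (Re (energy c (laplacian c (\<lambda>z. complex_of_real (w z))) (laplacian c (\<lambda>z. complex_of_real (w z)))))
      \<le> C * sqrt (Re (energy c (\<lambda>z. complex_of_real (w z)) (\<lambda>z. complex_of_real (w z))))"
    by (rule C)
  hence "sqrt (renergy c g / 2) \<le> C * sqrt (renergy c w / 2)"
    unfolding lap Re_energy_of_real[of c, OF nonneg g] Re_energy_of_real[of c, OF nonneg w] .
  hence "renergy c g / 2 \<le> C\<^sup>2 * (renergy c w / 2)"
    using renergy_nonneg[of c, OF nonneg] by (metis power_mono power_mult_distrib real_sqrt_ge_zero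
        real_sqrt_pow2 zero_le_divide_iff zero_le_numeral)
  moreover have "renergy c w \<le> 2"
    using renergy_real_dipole_diff_le[OF nonneg cxy(2) xy sym[of y x] f dipole f dipole] cxy(1)
    by (simp add: w_def)
  moreover have "real (card {z. 0 < c x z}) \<le> renergy c g"
    unfolding g_def by (rule card_neighbours_le_renergy[OF nonneg lf loop _ cxy(2) g[unfolded g_def]])
      (use unit in \<open>metis less_irrefl order_refl\<close>)
  ultimately show ?thesis
    using mult_left_mono[of "renergy c w" 2 "C\<^sup>2"] by simp
qed

lemma degree_bounded_if_laplacian_bounded:
  assumes c: "conductance c" and lf: "locally_finite_net c" and conn: "connected_net c"
    and unit: "\<forall>x y. c x y = 0 \<or> c x y = 1" and bounded: "laplacian_bounded c r"
  shows "\<exists>D. \<forall>x. real (card {y. 0 < c x y}) \<le> D"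
proof -
  obtain C where C: "\<And>u. u \<in> laplacian_domain c r \<Longrightarrow>
      sqrt (Re (energy c (laplacian c u) (laplacian c u))) \<le> C * sqrt (Re (energy c u u))"
    using bounded unfolding laplacian_bounded_def by blast
  obtain f where f: "\<And>z. finite_renergy c (f z)"
    and dipole: "\<And>z g. finite_renergy c g \<Longrightarrow> rform c (f z) g = 2 * (g z - g r)"
    using real_dipole_exists[OF c lf conn, of _ r] by metis
  have "real (card {z. 0 < c x z}) \<le> 2 * C\<^sup>2" for x
    using card_neighbours_le_if_laplacian_le[OF c lf unit _ f dipole C]
    by (cases "{z. 0 < c x z} = {}") auto
  thus ?thesis by blast
qed

lemma cmod_laplacian_sq_le:
  assumes nonneg: "\<And>x y. 0 \<le> b x y" and lf: "locally_finite_net b"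
    and M: "\<And>y. b x y \<le> M" and D: "real (card {y. 0 < b x y}) \<le> D"
  shows "(cmod (laplacian b u x))\<^sup>2 \<le> M * D * (\<Sum>y\<in>{y. 0 < b x y}. energy_density b u (x, y))"
proof -
  define N where "N = {y. 0 < b x y}"
  have "0 \<le> M" using M[of x] nonneg[of x x] by linarith
  have S: "0 \<le> (\<Sum>y\<in>N. energy_density b u (x, y))"
    by (rule sum_nonneg) (simp add: energy_density_def nonneg)
  have "cmod (laplacian b u x) \<le> (\<Sum>y\<in>N. cmod (complex_of_real (b x y) * (u x - u y)))"
    unfolding laplacian_def N_def by (rule norm_sum)
  also have "\<dots> = (\<Sum>y\<in>N. b x y * cmod (u x - u y))" using nonneg by (simp add: norm_mult)
  finally have "(cmod (laplacian b u x))\<^sup>2 \<le> (\<Sum>y\<in>N. b x y * cmod (u x - u y))\<^sup>2"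
    by (rule power_mono) simp
  also have "\<dots> \<le> (\<Sum>y\<in>N. (b x y * cmod (u x - u y))\<^sup>2) * card N"
    by (rule sum_squared_le_sum_of_squares)
  also have "(\<Sum>y\<in>N. (b x y * cmod (u x - u y))\<^sup>2) \<le> M * (\<Sum>y\<in>N. energy_density b u (x, y))"
    unfolding sum_distrib_left
  proof (rule sum_mono)
    fix y
    have "(b x y * cmod (u x - u y))\<^sup>2 = b x y * energy_density b u (x, y)"
      by (simp add: energy_density_def power2_eq_square)
    also have "\<dots> \<le> M * energy_density b u (x, y)"
      using M by (intro mult_right_mono) (simp_all add: energy_density_def nonneg)
    finally show "(b x y * cmod (u x - u y))\<^sup>2 \<le> M * energy_density b u (x, y)" .
  qed
  also have "M * (\<Sum>y\<in>N. energy_density b u (x, y)) * card N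
      \<le> M * (\<Sum>y\<in>N. energy_density b u (x, y)) * D"
    using D \<open>0 \<le> M\<close> S unfolding N_def by (intro mult_left_mono) auto
  finally show ?thesis
    unfolding N_def by (simp add: mult_right_mono algebra_simps)
qed

lemma sum_edges_le_sum_vertices:
  assumes nonneg: "\<And>x y. 0 \<le> b x y" and lf: "locally_finite_net b"
    and P: "finite P" and \<phi>: "\<And>x. 0 \<le> \<phi> x"
  shows "(\<Sum>p\<in>P. b (fst p) (snd p) * \<phi> (fst p))
    \<le> (\<Sum>x\<in>fst ` P. (\<Sum>y\<in>{y. 0 < b x y}. b x y) * \<phi> x)"
proof -
  define h where "h p = b (fst p) (snd p) * \<phi> (fst p)" for p
  define T where "T = Sigma (fst ` P) (\<lambda>x. {y. 0 < b x y})"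
  have T: "finite T"
    using P lf unfolding T_def locally_finite_net_def by (intro finite_SigmaI) auto
  have "sum h P = sum h (P \<inter> T)"
  proof (rule sum.mono_neutral_right[OF P])
    show "\<forall>p\<in>P - P \<inter> T. h p = 0"
      using nonneg unfolding T_def h_def by (force simp: order_le_less)
  qed auto
  also have "\<dots> \<le> sum h T"
    using T \<phi> nonneg by (intro sum_mono2) (auto simp: h_def)
  also have "\<dots> = (\<Sum>x\<in>fst ` P. \<Sum>y\<in>{y. 0 < b x y}. b x y * \<phi> x)"
    unfolding T_def h_def using P lf unfolding locally_finite_net_def
    by (simp add: sum.Sigma case_prod_unfold)
  also have "\<dots> = (\<Sum>x\<in>fst ` P. (\<Sum>y\<in>{y. 0 < b x y}. b x y) * \<phi> x)"
    by (simp add: sum_distrib_right)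
  finally show ?thesis unfolding h_def .
qed

lemma sum_edges_laplacian_sq_le:
  assumes nonneg: "\<And>x y. 0 \<le> b x y" and lf: "locally_finite_net b"
    and M: "\<And>x y. b x y \<le> M" and D: "\<And>x. real (card {y. 0 < b x y}) \<le> D"
    and u: "finite_energy b u" and P: "finite P"
  shows "(\<Sum>p\<in>P. b (fst p) (snd p) * (cmod (laplacian b u (fst p)))\<^sup>2)
    \<le> (M * D)\<^sup>2 * infsum (energy_density b u) UNIV"
proof -
  define K where "K = M * D"
  define X where "X = fst ` P"
  define N where "N x = {y. 0 < b x y}" for x
  have "0 \<le> M" using M nonneg order_trans by blast
  moreover have "0 \<le> D" using D of_nat_0_le_iff order_trans by blast
  ultimately have K: "0 \<le> K" by (simp add: K_def)
  have X: "finite X" using P X_def by simp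
  have N: "finite (N x)" for x using lf unfolding locally_finite_net_def N_def by auto
  have "(\<Sum>p\<in>P. b (fst p) (snd p) * (cmod (laplacian b u (fst p)))\<^sup>2)
      \<le> (\<Sum>x\<in>X. (\<Sum>y\<in>N x. b x y) * (cmod (laplacian b u x))\<^sup>2)"
    unfolding X_def N_def by (rule sum_edges_le_sum_vertices[OF nonneg lf P]) simp
  also have "\<dots> \<le> (\<Sum>x\<in>X. K * (K * (\<Sum>y\<in>N x. energy_density b u (x, y))))"
  proof (rule sum_mono)
    fix x
    have "(\<Sum>y\<in>N x. b x y) \<le> (\<Sum>y\<in>N x. M)" using M by (intro sum_mono) auto
    also have "\<dots> \<le> K"
      using mult_left_mono[OF D[of x] \<open>0 \<le> M\<close>] by (simp add: K_def N_def mult.commute)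
    finally have "(\<Sum>y\<in>N x. b x y) * (cmod (laplacian b u x))\<^sup>2 \<le> K * (cmod (laplacian b u x))\<^sup>2"
      by (rule mult_right_mono) simp
    also have "\<dots> \<le> K * (K * (\<Sum>y\<in>N x. energy_density b u (x, y)))"
      using cmod_laplacian_sq_le[OF nonneg lf M D] K unfolding K_def N_def
      by (intro mult_left_mono) auto
    finally show "(\<Sum>y\<in>N x. b x y) * (cmod (laplacian b u x))\<^sup>2
        \<le> K * (K * (\<Sum>y\<in>N x. energy_density b u (x, y)))" .
  qed
  also have "\<dots> = K\<^sup>2 * sum (energy_density b u) (Sigma X N)"
    using X N by (simp add: sum.Sigma sum_distrib_left power2_eq_square mult.assoc)
  also have "\<dots> \<le> K\<^sup>2 * infsum (energy_density b u) UNIV"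
    using u X N unfolding finite_energy_iff_summable
    by (intro mult_left_mono finite_sum_le_infsum) (auto simp: energy_density_def nonneg)
  finally show ?thesis unfolding K_def .
qed

lemma laplacian_energy_le:
  assumes b: "conductance b" and lf: "locally_finite_net b"
    and M: "\<And>x y. b x y \<le> M" and D: "\<And>x. real (card {y. 0 < b x y}) \<le> D"
    and u: "finite_energy b u"
  shows "finite_energy b (laplacian b u)"
    and "infsum (energy_density b (laplacian b u)) UNIV
      \<le> 4 * (M * D)\<^sup>2 * infsum (energy_density b u) UNIV"
proof -
  have sym: "\<And>x y. b x y = b y x" and nonneg: "\<And>x y. 0 \<le> b x y"
    using b unfolding conductance_def by auto
  define g where "g = laplacian b u"
  define h where "h p = b (fst p) (snd p) * (cmod (g (fst p)))\<^sup>2" for p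
  have "energy_density b g p \<le> 2 * h p + 2 * h (prod.swap p)" for p
  proof -
    obtain x y where p: "p = (x, y)" by fastforce
    have "(cmod (g x - g y))\<^sup>2 \<le> (cmod (g x) + cmod (g y))\<^sup>2"
      by (intro power_mono norm_triangle_ineq4) simp
    also have "\<dots> \<le> 2 * (cmod (g x))\<^sup>2 + 2 * (cmod (g y))\<^sup>2"
      using sum_squares_bound[of "cmod (g x)" "cmod (g y)"] by (simp add: power2_sum)
    finally have "b x y * (cmod (g x - g y))\<^sup>2 \<le> b x y * (2 * (cmod (g x))\<^sup>2 + 2 * (cmod (g y))\<^sup>2)"
      by (rule mult_left_mono) (rule nonneg)
    thus ?thesis using p by (simp add: energy_density_def h_def sym[of y x] algebra_simps)
  qed
  hence pairs: "sum (energy_density b g) P \<le> 2 * sum h P + 2 * sum h (prod.swap ` P)" for P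
    by (simp add: sum_mono sum.distrib sum_distrib_left sum.reindex flip: sum.distrib)
  have star: "sum h P \<le> (M * D)\<^sup>2 * infsum (energy_density b u) UNIV" if "finite P" for P
    unfolding h_def g_def by (rule sum_edges_laplacian_sq_le[OF nonneg lf M D u that])
  have "sum (energy_density b g) P \<le> 4 * (M * D)\<^sup>2 * infsum (energy_density b u) UNIV"
    if P: "finite P" for P
    using pairs[of P] star[OF P] star[OF finite_imageI[OF P, of prod.swap]] by linarith
  thus "finite_energy b (laplacian b u)"
    and "infsum (energy_density b (laplacian b u)) UNIV
      \<le> 4 * (M * D)\<^sup>2 * infsum (energy_density b u) UNIV"
    using nonneg_summable_infsum_le[of "energy_density b g"] nonneg
    unfolding finite_energy_iff_summable g_def by (auto simp: energy_density_def)
qed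

lemma laplacian_bounded_if_degree_bounded:
  assumes b: "conductance b" and lf: "locally_finite_net b"
    and M: "\<And>x y. b x y \<le> M" and D: "\<And>x. real (card {y. 0 < b x y}) \<le> D"
  shows "laplacian_bounded b r"
  unfolding laplacian_bounded_def
proof (intro exI ballI conjI)
  fix u assume "u \<in> laplacian_domain b r"
  have nonneg: "\<And>x y. 0 \<le> b x y" using b unfolding conductance_def by auto
  have u: "finite_energy b u" by (rule laplacian_domain_finite_energy[OF nonneg]) fact
  note lap = laplacian_energy_le[OF b lf M D u]
  show "finite_energy b (laplacian b u)" by (rule lap(1))
  have "Re (energy b (laplacian b u) (laplacian b u)) = infsum (energy_density b (laplacian b u)) UNIV / 2"
    by (rule Re_energy_self[of b, OF nonneg lap(1)])
  also have "\<dots> \<le> 4 * (M * D)\<^sup>2 * infsum (energy_density b u) UNIV / 2"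
    using lap(2) by (rule divide_right_mono) simp
  also have "\<dots> = (2 * (M * D))\<^sup>2 * (infsum (energy_density b u) UNIV / 2)"
    by (simp add: power_mult_distrib)
  finally have "sqrt (Re (energy b (laplacian b u) (laplacian b u)))
      \<le> sqrt ((2 * (M * D))\<^sup>2 * (infsum (energy_density b u) UNIV / 2))"
    by (rule real_sqrt_le_mono)
  also have "\<dots> = \<bar>2 * (M * D)\<bar> * sqrt (Re (energy b u u))"
    using Re_energy_self[of b, OF nonneg u] by (simp only: real_sqrt_mult real_sqrt_abs)
  finally show "sqrt (Re (energy b (laplacian b u) (laplacian b u)))
      \<le> \<bar>2 * (M * D)\<bar> * sqrt (Re (energy b u u))" .
qed

theorem corollary3p14:
  fixes c b :: "'a::countable \<Rightarrow> 'a \<Rightarrow> real" and r :: 'a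
  assumes "conductance c" and "locally_finite_net c" and "connected_net c"
    and "\<forall>x y. c x y = 0 \<or> c x y = 1"
    and "laplacian_bounded c r"
    and "conductance b" and "locally_finite_net b" and "connected_net b"
    and "bounded_conductance b"
    and "\<forall>x y. c x y = 0 \<longrightarrow> b x y = 0"
  shows "laplacian_bounded b r"
proof -
  obtain D where D: "\<And>x. real (card {y. 0 < c x y}) \<le> D"
    using degree_bounded_if_laplacian_bounded[OF assms(1-5)] by blast
  obtain M where M: "\<And>x y. b x y \<le> M" using assms(9) unfolding bounded_conductance_def by blast
  have "real (card {y. 0 < b x y}) \<le> D" for x
  proof -
    have "{y. 0 < b x y} \<subseteq> {y. 0 < c x y}"
      using assms(4,10) by (metis mem_Collect_eq subsetI less_irrefl zero_less_one)
    hence "card {y. 0 < b x y} \<le> card {y. 0 < c x y}"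
      using assms(2) unfolding locally_finite_net_def by (intro card_mono) auto
    thus ?thesis using D[of x] by linarith
  qed
  thus ?thesis using laplacian_bounded_if_degree_bounded[OF assms(6,7) M] by blast
qed

end
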